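(* Let $\mathcal G$ be a DAG with vertex set $\mathbf V$, $\mathbf Y\subseteq\mathbf V$, and $\eta_{\mathfrak a_{\boldsymbol\alpha}}$ an edge intervention that is node consistent for $\mathbf Y$. Then (in any causal structure for $\mathcal G$) $p(\mathbf Y(\mathfrak a_{\boldsymbol\alpha}))=p(\mathbf Y(\mathbf a_{\boldsymbol\alpha}))$, where $\mathbf a_{\boldsymbol\alpha}$ is the induced node intervention.
   Context: Let $\mathcal G$ be a DAG with finite vertex set $\mathbf V$; vertices are random variables with state spaces $\mathfrak X_V$; $\mathfrak X_{\mathbf A}=\prod_{A\in\mathbf A}\mathfrak X_A$; $\mathrm{pa}(V)$ are parents. A causal structure is a collection of one-step potential outcomes $V(\mathbf b)$, $\mathbf b\in\mathfrak X_{\mathrm{pa}(V)}$, with a joint distribution. Node interventions: $V(\mathbf a)=V(\mathbf a_{\mathrm{pa}(V)\cap\mathbf A},\{W(\mathbf a):W\in\mathrm{pa}(V)\setminus\mathbf A\})$ recursively. Edge interventions: for an edge set $\boldsymbol\alpha$, $\mathfrak a\in\mathfrak X_{\boldsymbol\alpha}=\prod_{(AB)\in\boldsymbol\alpha}\mathfrak X_A$ assigns each edge a value of its source; $V(\mathfrak a)=V(\mathfrak a_{\{(WV)\in\boldsymbol\alpha\}},\{W(\mathfrak a):W\in\mathrm{pa}(V),(WV)\notin\boldsymbol\alpha\})$ recursively. A directed path $\beta$ (sequence of distinct vertices joined by directed edges) with sink in $\mathbf Y$ is relevant for $\mathbf Y$ given $\boldsymbol\alpha$ if no edge of $\boldsymbol\alpha$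 lies on $\beta$ except possibly its first edge; $\mathrm{rel}_{\mathcal G}(\mathbf Y\mid\boldsymbol\alpha)$ is their set. $\boldsymbol\alpha$ is live for $\mathbf Y$ if each of its edges is the first edge of some relevant path. $\boldsymbol\alpha$ live for $\mathbf Y$ is consistent for $\mathbf Y$ if for every vertex $A$, the set of first edges of relevant paths with source $A$ is disjoint from or contained in $\boldsymbol\alpha$. $\eta_{\mathfrak a}$ is node consistent for $\mathbf Y$ if $\boldsymbol\alpha$ is live and consistent for $\mathbf Y$ and for every vertex $A$ all edges of $\boldsymbol\alpha$ with source $A$ get the same value; the induced node intervention $\mathbf a_{\boldsymbol\alpha}$ sets each source vertex $A$ of an edge in $\boldsymbol\alpha$ to that common value. *)

theory Defs
  imports "HOL-Probability.Probability"
begin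

definition dag :: "'v set \<Rightarrow> ('v \<times> 'v) set \<Rightarrow> bool" where
  "dag Vs E \<longleftrightarrow> finite Vs \<and> E \<subseteq> Vs \<times> Vs \<and> acyclic E"

definition pa :: "('v \<times> 'v) set \<Rightarrow> 'v \<Rightarrow> 'v set" where
  "pa E V = {W. (W, V) \<in> E}"

text \<open>Causal structure: one-step potential outcomes PO V b \<omega> (b a parent assignment,
  only its values on pa V matter; it is always passed restricted to pa V),
  defined jointly on the sample space of a probability space M, with values in
  the state spaces X.\<close>

definition causal_structure ::
  "'v set \<Rightarrow> ('v \<times> 'v) set \<Rightarrow> ('v \<Rightarrow> 'x set) \<Rightarrow> 'a measure
     \<Rightarrow> ('v \<Rightarrow> ('v \<Rightarrow> 'x) \<Rightarrow> 'a \<Rightarrow> 'x) \<Rightarrow> bool" where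
  "causal_structure Vs E X M PO \<longleftrightarrow> prob_space M \<and>
     (\<forall>V\<in>Vs. \<forall>b\<in>Pi\<^sub>E (pa E V) X. \<forall>\<omega>\<in>space M. PO V b \<omega> \<in> X V)"

text \<open>Generic recursive counterfactual: g W V = Some x means the edge W -> V
  receives the fixed value x; None means it passes on the counterfactual value of W.
  The counterfactual values are the unique solution of the recursive equations
  (unique since the graph is a DAG).\<close>

definition cf ::
  "'v set \<Rightarrow> ('v \<times> 'v) set \<Rightarrow> ('v \<Rightarrow> ('v \<Rightarrow> 'x) \<Rightarrow> 'a \<Rightarrow> 'x)
     \<Rightarrow> ('v \<Rightarrow> 'v \<Rightarrow> 'x option) \<Rightarrow> 'a \<Rightarrow> 'v \<Rightarrow> 'x" where
  "cf Vs E PO g \<omega> = (THE f. f \<in> extensional Vs \<and>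
      (\<forall>V\<in>Vs. f V = PO V (restrict (\<lambda>W. case g W V of Some x \<Rightarrow> x | None \<Rightarrow> f W) (pa E V)) \<omega>))"

definition node_cf ::
  "'v set \<Rightarrow> ('v \<times> 'v) set \<Rightarrow> ('v \<Rightarrow> ('v \<Rightarrow> 'x) \<Rightarrow> 'a \<Rightarrow> 'x)
     \<Rightarrow> 'v set \<Rightarrow> ('v \<Rightarrow> 'x) \<Rightarrow> 'a \<Rightarrow> 'v \<Rightarrow> 'x" where
  "node_cf Vs E PO A a = cf Vs E PO (\<lambda>W V. if W \<in> A then Some (a W) else None)"

definition edge_cf ::
  "'v set \<Rightarrow> ('v \<times> 'v) set \<Rightarrow> ('v \<Rightarrow> ('v \<Rightarrow> 'x) \<Rightarrow> 'a \<Rightarrow> 'x)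
     \<Rightarrow> ('v \<times> 'v) set \<Rightarrow> ('v \<times> 'v \<Rightarrow> 'x) \<Rightarrow> 'a \<Rightarrow> 'v \<Rightarrow> 'x" where
  "edge_cf Vs E PO alpha aa = cf Vs E PO (\<lambda>W V. if (W, V) \<in> alpha then Some (aa (W, V)) else None)"

definition dpath :: "'v set \<Rightarrow> ('v \<times> 'v) set \<Rightarrow> 'v list \<Rightarrow> bool" where
  "dpath Vs E p \<longleftrightarrow> p \<noteq> [] \<and> distinct p \<and> set p \<subseteq> Vs \<and>
     (\<forall>i. Suc i < length p \<longrightarrow> (p ! i, p ! Suc i) \<in> E)"

definition rel :: "'v set \<Rightarrow> ('v \<times> 'v) set \<Rightarrow> 'v set \<Rightarrow> ('v \<times> 'v) set \<Rightarrow> 'v list set" where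
  "rel Vs E Y alpha = {p. dpath Vs E p \<and> last p \<in> Y \<and>
     (\<forall>i. 1 \<le> i \<longrightarrow> Suc i < length p \<longrightarrow> (p ! i, p ! Suc i) \<notin> alpha)}"

definition first_edges :: "'v set \<Rightarrow> ('v \<times> 'v) set \<Rightarrow> 'v set \<Rightarrow> ('v \<times> 'v) set \<Rightarrow> 'v \<Rightarrow> ('v \<times> 'v) set" where
  "first_edges Vs E Y alpha A = {(p ! 0, p ! 1) | p. p \<in> rel Vs E Y alpha \<and> 2 \<le> length p \<and> hd p = A}"

definition live :: "'v set \<Rightarrow> ('v \<times> 'v) set \<Rightarrow> 'v set \<Rightarrow> ('v \<times> 'v) set \<Rightarrow> bool" where
  "live Vs E Y alpha \<longleftrightarrow> (\<forall>e\<in>alpha. \<exists>p\<in>rel Vs E Y alpha. 2 \<le> length p \<and> (p ! 0, p ! 1) = e)"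

definition consistent :: "'v set \<Rightarrow> ('v \<times> 'v) set \<Rightarrow> 'v set \<Rightarrow> ('v \<times> 'v) set \<Rightarrow> bool" where
  "consistent Vs E Y alpha \<longleftrightarrow> live Vs E Y alpha \<and>
     (\<forall>A. first_edges Vs E Y alpha A \<inter> alpha = {} \<or> first_edges Vs E Y alpha A \<subseteq> alpha)"

definition node_consistent ::
  "'v set \<Rightarrow> ('v \<times> 'v) set \<Rightarrow> 'v set \<Rightarrow> ('v \<times> 'v) set \<Rightarrow> ('v \<times> 'v \<Rightarrow> 'x) \<Rightarrow> bool" where
  "node_consistent Vs E Y alpha aa \<longleftrightarrow> consistent Vs E Y alpha \<and>
     (\<forall>e1\<in>alpha. \<forall>e2\<in>alpha. fst e1 = fst e2 \<longrightarrow> aa e1 = aa e2)"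

definition induced_nodes :: "('v \<times> 'v) set \<Rightarrow> 'v set" where
  "induced_nodes alpha = fst ` alpha"

definition induced_vals :: "('v \<times> 'v) set \<Rightarrow> ('v \<times> 'v \<Rightarrow> 'x) \<Rightarrow> 'v \<Rightarrow> 'x" where
  "induced_vals alpha aa W = aa (SOME e. e \<in> alpha \<and> fst e = W)"

end

theory Submission
  imports Defs
begin

text \<open>Both interventions leave the same counterfactual values on every vertex that reaches \<open>Y\<close>
  along a directed path containing no edge of \<open>\<alpha>\<close> at all. Such a vertex \<open>V\<close> has the same input
  from each parent \<open>W\<close> under both interventions: if \<open>(W,V) \<in> \<alpha>\<close>, node consistency makes the
  edge value the value induced on \<open>W\<close>; otherwise \<open>W\<close> again reaches \<open>Y\<close> without \<open>\<alpha>\<close>-edges, the edge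
  \<open>(W,V)\<close> is the first edge of a relevant path, so by consistency no edge out of \<open>W\<close> lies in \<open>\<alpha>\<close>
  and \<open>W\<close> is not intervened on by the node intervention either. Induction along the DAG
  finishes the argument, and \<open>Y\<close> is contained in this set of vertices. The counterfactuals thus
  agree pointwise on the sample space, so no property of the causal structure is needed.\<close>

lemma dag_wf: "dag Vs E \<Longrightarrow> wf E"
  unfolding dag_def by (meson finite_SigmaI finite_acyclic_wf finite_subset)

lemma cf_solution_unique:
  assumes "dag Vs E"
    and "f1 \<in> extensional Vs" "\<forall>V\<in>Vs. f1 V = PO V (restrict (\<lambda>W. case g W V of Some x \<Rightarrow> x | None \<Rightarrow> f1 W) (pa E V)) \<omega>"
    and "f2 \<in> extensional Vs" "\<forall>V\<in>Vs. f2 V = PO V (restrict (\<lambda>W. case g W V of Some x \<Rightarrow> x | None \<Rightarrow> f2 W) (pa E V)) \<omega>"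
  shows "f1 = f2"
proof -
  have EV: "E \<subseteq> Vs \<times> Vs" using assms(1) by (simp add: dag_def)
  have "V \<in> Vs \<longrightarrow> f1 V = f2 V" for V
  proof (induction V rule: wf_induct_rule[OF dag_wf[OF assms(1)]])
    case (1 V)
    show ?case
    proof
      assume V: "V \<in> Vs"
      have "restrict (\<lambda>W. case g W V of Some x \<Rightarrow> x | None \<Rightarrow> f1 W) (pa E V)
          = restrict (\<lambda>W. case g W V of Some x \<Rightarrow> x | None \<Rightarrow> f2 W) (pa E V)"
        by (rule restrict_ext) (use 1 EV in \<open>auto simp: pa_def split: option.split\<close>)
      then show "f1 V = f2 V" using assms(3,5) V by simp
    qed
  qed
  then show ?thesis using assms(2,4) by (auto intro: extensionalityI)
qed

lemma cf_equation:
  assumes "dag Vs E" "V \<in> Vs"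
  shows "cf Vs E PO g \<omega> V = PO V (restrict (\<lambda>W. case g W V of Some x \<Rightarrow> x | None \<Rightarrow> cf Vs E PO g \<omega> W) (pa E V)) \<omega>"
proof -
  let ?P = "\<lambda>f. f \<in> extensional Vs \<and>
      (\<forall>V\<in>Vs. f V = PO V (restrict (\<lambda>W. case g W V of Some x \<Rightarrow> x | None \<Rightarrow> f W) (pa E V)) \<omega>)"
  define H where "H = (\<lambda>f V. if V \<in> Vs
      then PO V (restrict (\<lambda>W. case g W V of Some x \<Rightarrow> x | None \<Rightarrow> f W) (pa E V)) \<omega> else undefined)"
  define F where "F = wfrec E H"
  have "F V = H F V" for V
  proof -
    have "F V = H (cut F E V) V" unfolding F_def by (rule wfrec[OF dag_wf[OF assms(1)]])
    also have "\<dots> = H F V"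
      unfolding H_def
      by (auto intro!: arg_cong[where f = "\<lambda>b. PO V b \<omega>"] restrict_ext
          simp: cut_def pa_def split: option.split)
    finally show ?thesis .
  qed
  then have F: "?P F" by (auto simp: H_def extensional_def)
  have "?P (THE f. ?P f)"
  proof (rule theI[of ?P F, OF F])
    fix f assume "?P f"
    then show "f = F"
      using F by (intro cf_solution_unique[OF assms(1), where g = g and PO = PO and \<omega> = \<omega>]) simp_all
  qed
  then show ?thesis using assms(2) unfolding cf_def by blast
qed

lemma cf_eq_on_closed_set:
  assumes "dag Vs E" "R \<subseteq> Vs"
    and agree: "\<And>V W. V \<in> R \<Longrightarrow> (W, V) \<in> E \<Longrightarrow> g1 W V = g2 W V"
    and closed: "\<And>V W. V \<in> R \<Longrightarrow> (W, V) \<in> E \<Longrightarrow> g1 W V = None \<Longrightarrow> W \<in> R"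
    and "V \<in> R"
  shows "cf Vs E PO g1 \<omega> V = cf Vs E PO g2 \<omega> V"
  using \<open>V \<in> R\<close>
proof (induction V rule: wf_induct_rule[OF dag_wf[OF assms(1)]])
  case (1 V)
  have "restrict (\<lambda>W. case g1 W V of Some x \<Rightarrow> x | None \<Rightarrow> cf Vs E PO g1 \<omega> W) (pa E V)
      = restrict (\<lambda>W. case g2 W V of Some x \<Rightarrow> x | None \<Rightarrow> cf Vs E PO g2 \<omega> W) (pa E V)"
  proof (rule restrict_ext)
    fix W assume "W \<in> pa E V"
    then have WV: "(W, V) \<in> E" by (simp add: pa_def)
    show "(case g1 W V of Some x \<Rightarrow> x | None \<Rightarrow> cf Vs E PO g1 \<omega> W)
        = (case g2 W V of Some x \<Rightarrow> x | None \<Rightarrow> cf Vs E PO g2 \<omega> W)"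
      using agree[OF 1(2) WV] closed[OF 1(2) WV] 1(1)[OF WV] by (auto split: option.split)
  qed
  moreover have "V \<in> Vs" using 1(2) \<open>R \<subseteq> Vs\<close> by blast
  ultimately show ?case by (simp add: cf_equation[OF assms(1)])
qed

lemma dpath_Cons:
  assumes "dag Vs E" "dpath Vs E p" "(W, hd p) \<in> E"
  shows "dpath Vs E (W # p)"
proof -
  have p: "p \<noteq> []" "distinct p" "set p \<subseteq> Vs" "\<forall>i. Suc i < length p \<longrightarrow> (p ! i, p ! Suc i) \<in> E"
    using assms(2) by (auto simp: dpath_def)
  have chain: "\<forall>i. Suc i < length (W # p) \<longrightarrow> ((W # p) ! i, (W # p) ! Suc i) \<in> E"
    using p(1,4) assms(3) by (auto simp: nth_Cons hd_conv_nth split: nat.split)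
  have "(hd p, U) \<in> E\<^sup>*" if "U \<in> set p" for U
  proof -
    obtain k where k: "k < length p" "p ! k = U" using \<open>U \<in> set p\<close> by (auto simp: in_set_conv_nth)
    have "(p ! 0, p ! k) \<in> E\<^sup>*" if "k < length p" for k
      using that by (induction k) (auto intro: rtrancl_into_rtrancl p(4)[rule_format])
    then show ?thesis using k p(1) by (metis hd_conv_nth)
  qed
  then have "W \<notin> set p"
    using assms(3) \<open>dag Vs E\<close> unfolding dag_def acyclic_def by (meson rtrancl_into_trancl2)
  moreover have "W \<in> Vs" using assms(1,3) by (auto simp: dag_def)
  ultimately show ?thesis using p chain by (simp add: dpath_def)
qed

definition alpha_free_ancestors :: "'v set \<Rightarrow> ('v \<times> 'v) set \<Rightarrow> 'v set \<Rightarrow> ('v \<times> 'v) set \<Rightarrow> 'v set" where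
  "alpha_free_ancestors Vs E Y alpha = {hd p | p. dpath Vs E p \<and> last p \<in> Y \<and>
     (\<forall>i. Suc i < length p \<longrightarrow> (p ! i, p ! Suc i) \<notin> alpha)}"

lemma subset_alpha_free_ancestors: "Y \<subseteq> Vs \<Longrightarrow> Y \<subseteq> alpha_free_ancestors Vs E Y alpha"
  unfolding alpha_free_ancestors_def
  by clarify (rule exI[where x = "[_]"], auto simp: dpath_def)

lemma alpha_free_ancestors_subset: "alpha_free_ancestors Vs E Y alpha \<subseteq> Vs"
  unfolding alpha_free_ancestors_def dpath_def by (auto simp: hd_in_set)

lemma alpha_free_ancestors_parent:
  assumes "dag Vs E" "V \<in> alpha_free_ancestors Vs E Y alpha" "(W, V) \<in> E" "(W, V) \<notin> alpha"
  shows "W \<in> alpha_free_ancestors Vs E Y alpha"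
    and "(W, V) \<in> first_edges Vs E Y alpha W"
proof -
  obtain p where p: "dpath Vs E p" "hd p = V" "last p \<in> Y"
      "\<forall>i. Suc i < length p \<longrightarrow> (p ! i, p ! Suc i) \<notin> alpha"
    using assms(2) unfolding alpha_free_ancestors_def by blast
  have "p \<noteq> []" using p(1) by (simp add: dpath_def)
  have q_free: "\<forall>i. Suc i < length (W # p) \<longrightarrow> ((W # p) ! i, (W # p) ! Suc i) \<notin> alpha"
  proof (intro allI impI)
    fix i assume "Suc i < length (W # p)"
    then show "((W # p) ! i, (W # p) ! Suc i) \<notin> alpha"
      using p(2,4) assms(4) \<open>p \<noteq> []\<close> by (cases i) (auto simp: hd_conv_nth)
  qed
  have q: "dpath Vs E (W # p)" "last (W # p) \<in> Y" "((W # p) ! 0, (W # p) ! 1) = (W, V)"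
      "2 \<le> length (W # p)"
    using dpath_Cons[OF assms(1) p(1)] p(2,3) assms(3) \<open>p \<noteq> []\<close>
    by (auto simp: hd_conv_nth Suc_le_eq)
  show "W \<in> alpha_free_ancestors Vs E Y alpha"
    unfolding alpha_free_ancestors_def
    by (rule CollectI, rule exI[of _ "W # p"]) (use q(1,2) q_free in \<open>simp only: list.sel(1) simp_thms\<close>)
  have "W # p \<in> rel Vs E Y alpha" unfolding rel_def using q(1,2) q_free by blast
  then show "(W, V) \<in> first_edges Vs E Y alpha W"
    unfolding first_edges_def using q(3,4) by force
qed

lemma consistent_first_edge_not_induced:
  assumes "consistent Vs E Y alpha" "(W, V) \<in> first_edges Vs E Y alpha W" "(W, V) \<notin> alpha"
  shows "W \<notin> induced_nodes alpha"
proof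
  assume "W \<in> induced_nodes alpha"
  then obtain U where WU: "(W, U) \<in> alpha" by (auto simp: induced_nodes_def)
  then obtain r where r: "r \<in> rel Vs E Y alpha" "2 \<le> length r" "(r ! 0, r ! 1) = (W, U)"
    using assms(1) unfolding consistent_def live_def by blast
  have "hd r = W" using r(2,3) by (cases r) auto
  then have "(W, U) \<in> first_edges Vs E Y alpha W"
    unfolding first_edges_def using r by force
  then have "first_edges Vs E Y alpha W \<subseteq> alpha"
    using assms(1) WU unfolding consistent_def by blast
  then show False using assms(2,3) by blast
qed

lemma induced_vals_eq:
  assumes "node_consistent Vs E Y alpha aa" "(W, V) \<in> alpha"
  shows "induced_vals alpha aa W = aa (W, V)"
proof -
  have "\<exists>e. e \<in> alpha \<and> fst e = W" using assms(2) by force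
  then have "(SOME e. e \<in> alpha \<and> fst e = W) \<in> alpha \<and> fst (SOME e. e \<in> alpha \<and> fst e = W) = W"
    by (rule someI_ex)
  then show ?thesis
    using assms unfolding induced_vals_def node_consistent_def by (metis fst_conv)
qed

lemma edge_cf_eq_node_cf_on_alpha_free_ancestors:
  assumes "dag Vs E" "node_consistent Vs E Y alpha aa" "V \<in> alpha_free_ancestors Vs E Y alpha"
  shows "edge_cf Vs E PO alpha aa \<omega> V
       = node_cf Vs E PO (induced_nodes alpha) (induced_vals alpha aa) \<omega> V"
  unfolding edge_cf_def node_cf_def
proof (rule cf_eq_on_closed_set[OF assms(1) alpha_free_ancestors_subset _ _ assms(3)])
  fix V W assume V: "V \<in> alpha_free_ancestors Vs E Y alpha" and WV: "(W, V) \<in> E"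
  show "(if (W, V) \<in> alpha then Some (aa (W, V)) else None)
      = (if W \<in> induced_nodes alpha then Some (induced_vals alpha aa W) else None)"
  proof (cases "(W, V) \<in> alpha")
    case True
    then have "W \<in> induced_nodes alpha" by (force simp: induced_nodes_def)
    with True show ?thesis by (simp add: induced_vals_eq[OF assms(2)])
  next
    case False
    have "consistent Vs E Y alpha" using assms(2) by (simp add: node_consistent_def)
    with False show ?thesis using consistent_first_edge_not_induced
        alpha_free_ancestors_parent(2)[OF assms(1) V WV False] by simp
  qed
  show "W \<in> alpha_free_ancestors Vs E Y alpha"
    if "(if (W, V) \<in> alpha then Some (aa (W, V)) else None) = None"
    using alpha_free_ancestors_parent(1)[OF assms(1) V WV] that by (simp split: if_splits)
qed

theorem lemma11:
  fixes Vs :: "'v set" and E :: "('v \<times> 'v) set" and X :: "'v \<Rightarrow> 'x set"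
    and M :: "'a measure" and PO :: "'v \<Rightarrow> ('v \<Rightarrow> 'x) \<Rightarrow> 'a \<Rightarrow> 'x"
    and Y :: "'v set" and alpha :: "('v \<times> 'v) set" and aa :: "'v \<times> 'v \<Rightarrow> 'x"
    and N :: "('v \<Rightarrow> 'x) measure"
  assumes "dag Vs E"
    and "causal_structure Vs E X M PO"
    and "Y \<subseteq> Vs"
    and "alpha \<subseteq> E"
    and "\<forall>e\<in>alpha. aa e \<in> X (fst e)"
    and "node_consistent Vs E Y alpha aa"
  shows "distr M N (\<lambda>\<omega>. restrict (edge_cf Vs E PO alpha aa \<omega>) Y)
       = distr M N (\<lambda>\<omega>. restrict (node_cf Vs E PO (induced_nodes alpha) (induced_vals alpha aa) \<omega>) Y)"
proof -
  have "restrict (edge_cf Vs E PO alpha aa \<omega>) Y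
      = restrict (node_cf Vs E PO (induced_nodes alpha) (induced_vals alpha aa) \<omega>) Y" for \<omega>
    using subset_alpha_free_ancestors[OF assms(3)]
    by (intro restrict_ext edge_cf_eq_node_cf_on_alpha_free_ancestors[OF assms(1,6)]) blast
  then show ?thesis by simp
qed

end
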